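(* Let $R$ be a ring with identity, $(S,\leq)$ a strictly ordered monoid which is quasitotally ordered, and $\omega:S\to\mathrm{End}(R)$ a monoid homomorphism. Assume $R$ is $S$-compatible and $(S,\omega)$-Armendariz, and let $A=R[[S,\omega]]$. (1) If $R$ is a generalized right Baer ring, then $A$ is a generalized right Baer ring. (2) If $R$ is a generalized right quasi-Baer ring, then $A$ is a generalized right quasi-Baer ring.
   Context: All rings are associative with identity. For a nonempty subset $X$ of a ring $R$, $r_R(X)=\{a\in R : xa=0 \text{ for all } x\in X\}$ is its right annihilator, and for a positive integer $n$, $X^n$ denotes the set of all products $a_1a_2\cdots a_n$ with $a_i\in X$ for $1\le i\le n$. A ring $R$ is generalized right Baer if for every nonempty subset $X$ of $R$ there exist a positive integer $n$ (depending on $X$) and an idempotent $e\in R$ with $r_R(X^n)=eR$. A ring $R$ is generalized right quasi-Baer if for every right ideal $I$ of $R$ there exist a positive integer $n$ (depending on $I$) and an idempotent $e\in R$ with $r_R(I^n)=eR$. An ordered monoid $(S,\leq)$ is a monoid with a partial order such that $u\le v$ implies $ut\le vt$ and $tu\le tv$ for all $t\in S$; it is strictly ordered if $u<v$ implies $ut<vt$ and $tu<tv$ for all $t\in S$. It is quasitotally ordered if $\leq$ can be refined to an order $\preceq$ with respect to which $S$ is a strictly totally ordered monoid. A subset of $S$ is artinian if every strictly decreasing sequence in it is finite, and narrow if every subset of pairwise incomparable elements is finite. Given a ring $R$, a strictly ordered monoid $(S,\le)$ and a monoid homomorphism $\omega:S\to\mathrm{End}(R)$, $s\mapsto\omega_s$,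 the ring of skew generalized power series $R[[S,\omega]]$ is the set of all maps $f:S\to R$ whose support $\mathrm{supp}(f)=\{s\in S: f(s)\neq 0\}$ is artinian and narrow, with pointwise addition and multiplication $(fg)(s)=\sum_{(u,v)\in X_s(f,g)} f(u)\,\omega_u(g(v))$, where $X_s(f,g)=\{(u,v)\in S\times S: uv=s,\ f(u)\ne0,\ g(v)\ne0\}$ (a finite set; an empty sum is $0$). An endomorphism $\sigma$ of $R$ is compatible if for all $a,b\in R$: $ab=0 \iff a\sigma(b)=0$. $R$ is $S$-compatible if $\omega_s$ is compatible for every $s\in S$. $R$ is $(S,\omega)$-Armendariz if whenever $f,g\in R[[S,\omega]]$ satisfy $fg=0$, then $f(s)\,\omega_s(g(t))=0$ for all $s,t\in S$. *)

theory Defs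
  imports Main
begin

definition rann :: "'r set \<Rightarrow> ('r \<Rightarrow> 'r \<Rightarrow> 'r) \<Rightarrow> 'r \<Rightarrow> 'r set \<Rightarrow> 'r set" where
  "rann C mult zero X = {a \<in> C. \<forall>x\<in>X. mult x a = zero}"

fun setpow :: "('r \<Rightarrow> 'r \<Rightarrow> 'r) \<Rightarrow> 'r set \<Rightarrow> nat \<Rightarrow> 'r set" where
  "setpow mult X 0 = {}"
| "setpow mult X (Suc 0) = X"
| "setpow mult X (Suc (Suc n)) = {mult x y | x y. x \<in> X \<and> y \<in> setpow mult X (Suc n)}"

definition right_ideal_in ::
  "'r set \<Rightarrow> ('r \<Rightarrow> 'r \<Rightarrow> 'r) \<Rightarrow> ('r \<Rightarrow> 'r) \<Rightarrow> ('r \<Rightarrow> 'r \<Rightarrow> 'r) \<Rightarrow> 'r \<Rightarrow> 'r set \<Rightarrow> bool" where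
  "right_ideal_in C add neg mult zero I \<longleftrightarrow>
     I \<subseteq> C \<and> zero \<in> I \<and> (\<forall>x\<in>I. \<forall>y\<in>I. add x y \<in> I) \<and> (\<forall>x\<in>I. neg x \<in> I)
     \<and> (\<forall>x\<in>I. \<forall>r\<in>C. mult x r \<in> I)"

definition gen_right_Baer_in :: "'r set \<Rightarrow> ('r \<Rightarrow> 'r \<Rightarrow> 'r) \<Rightarrow> 'r \<Rightarrow> bool" where
  "gen_right_Baer_in C mult zero \<longleftrightarrow>
     (\<forall>X. X \<subseteq> C \<and> X \<noteq> {} \<longrightarrow>
        (\<exists>n>0. \<exists>e\<in>C. mult e e = e \<and>
           rann C mult zero (setpow mult X n) = {mult e a | a. a \<in> C}))"

definition gen_right_quasi_Baer_in ::
  "'r set \<Rightarrow> ('r \<Rightarrow> 'r \<Rightarrow> 'r) \<Rightarrow> ('r \<Rightarrow> 'r) \<Rightarrow> ('r \<Rightarrow> 'r \<Rightarrow> 'r) \<Rightarrow> 'r \<Rightarrow> bool" where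
  "gen_right_quasi_Baer_in C add neg mult zero \<longleftrightarrow>
     (\<forall>I. right_ideal_in C add neg mult zero I \<longrightarrow>
        (\<exists>n>0. \<exists>e\<in>C. mult e e = e \<and>
           rann C mult zero (setpow mult I n) = {mult e a | a. a \<in> C}))"

abbreviation gen_right_Baer :: "'a::ring_1 itself \<Rightarrow> bool" where
  "gen_right_Baer _ \<equiv> gen_right_Baer_in (UNIV::'a set) (*) 0"

abbreviation gen_right_quasi_Baer :: "'a::ring_1 itself \<Rightarrow> bool" where
  "gen_right_quasi_Baer _ \<equiv> gen_right_quasi_Baer_in (UNIV::'a set) (+) uminus (*) 0"

definition strictly_ordered_monoid_wrt :: "('b::monoid_mult \<Rightarrow> 'b \<Rightarrow> bool) \<Rightarrow> bool" where
  "strictly_ordered_monoid_wrt le \<longleftrightarrow>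
     (\<forall>x. le x x) \<and> (\<forall>x y z. le x y \<longrightarrow> le y z \<longrightarrow> le x z) \<and> (\<forall>x y. le x y \<longrightarrow> le y x \<longrightarrow> x = y)
     \<and> (\<forall>u v t. le u v \<longrightarrow> le (u * t) (v * t) \<and> le (t * u) (t * v))
     \<and> (\<forall>u v t. le u v \<and> u \<noteq> v \<longrightarrow> (le (u * t) (v * t) \<and> u * t \<noteq> v * t) \<and> (le (t * u) (t * v) \<and> t * u \<noteq> t * v))"

definition quasitotally_ordered :: "('b::monoid_mult \<Rightarrow> 'b \<Rightarrow> bool) \<Rightarrow> bool" where
  "quasitotally_ordered le \<longleftrightarrow>
     (\<exists>le'. strictly_ordered_monoid_wrt le' \<and> (\<forall>x y. le' x y \<or> le' y x)
        \<and> (\<forall>x y. le x y \<longrightarrow> le' x y))"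

definition artinian_set :: "'b::order set \<Rightarrow> bool" where
  "artinian_set X \<longleftrightarrow> \<not> (\<exists>g::nat \<Rightarrow> 'b. \<forall>n. g n \<in> X \<and> g (Suc n) < g n)"

definition narrow_set :: "'b::order set \<Rightarrow> bool" where
  "narrow_set X \<longleftrightarrow> (\<forall>Y \<subseteq> X. (\<forall>x\<in>Y. \<forall>y\<in>Y. x \<noteq> y \<longrightarrow> \<not> x \<le> y \<and> \<not> y \<le> x) \<longrightarrow> finite Y)"

definition supp :: "('b \<Rightarrow> 'a::zero) \<Rightarrow> 'b set" where
  "supp f = {s. f s \<noteq> 0}"

definition sgps :: "('b::order \<Rightarrow> 'a::zero) set" where
  "sgps = {f. artinian_set (supp f) \<and> narrow_set (supp f)}"

definition sgps_mult :: "('b::monoid_mult \<Rightarrow> 'a::ring_1 \<Rightarrow> 'a) \<Rightarrow> ('b \<Rightarrow> 'a) \<Rightarrow> ('b \<Rightarrow> 'a) \<Rightarrow> 'b \<Rightarrow> 'a" where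
  "sgps_mult \<omega> f g s = (\<Sum>(u, v) \<in> {(u, v). u * v = s \<and> f u \<noteq> 0 \<and> g v \<noteq> 0}. f u * \<omega> u (g v))"

definition ring_endo :: "('a::ring_1 \<Rightarrow> 'a) \<Rightarrow> bool" where
  "ring_endo \<sigma> \<longleftrightarrow> (\<forall>a b. \<sigma> (a + b) = \<sigma> a + \<sigma> b) \<and> (\<forall>a b. \<sigma> (a * b) = \<sigma> a * \<sigma> b) \<and> \<sigma> 1 = 1"

definition monoid_hom_to_End :: "('b::monoid_mult \<Rightarrow> 'a::ring_1 \<Rightarrow> 'a) \<Rightarrow> bool" where
  "monoid_hom_to_End \<omega> \<longleftrightarrow> (\<forall>s. ring_endo (\<omega> s)) \<and> \<omega> 1 = id \<and> (\<forall>s t. \<omega> (s * t) = \<omega> s \<circ> \<omega> t)"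

definition compatible_endo :: "('a::ring_1 \<Rightarrow> 'a) \<Rightarrow> bool" where
  "compatible_endo \<sigma> \<longleftrightarrow> (\<forall>a b. a * b = 0 \<longleftrightarrow> a * \<sigma> b = 0)"

definition S_compatible :: "('b \<Rightarrow> 'a::ring_1 \<Rightarrow> 'a) \<Rightarrow> bool" where
  "S_compatible \<omega> \<longleftrightarrow> (\<forall>s. compatible_endo (\<omega> s))"

definition S_omega_Armendariz :: "('b::{monoid_mult,order} \<Rightarrow> 'a::ring_1 \<Rightarrow> 'a) \<Rightarrow> bool" where
  "S_omega_Armendariz \<omega> \<longleftrightarrow>
     (\<forall>f\<in>sgps. \<forall>g\<in>sgps. sgps_mult \<omega> f g = (\<lambda>_. 0) \<longrightarrow> (\<forall>s t. f s * \<omega> s (g t) = 0))"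

end

theory Submission
  imports Defs "HOL-Library.Ramsey"
begin

text \<open>By \<open>S\<close>-compatibility and the Armendariz property, \<open>f g = 0\<close> in \<open>A = R[[S,\<omega>]]\<close>
  iff \<open>f(s) g(t) = 0\<close> for all \<open>s, t\<close>. Applying the Armendariz property to \<open>a f\<close> and
  \<open>k \<omega>(b)\<close> instead of \<open>f\<close> and \<open>k\<close> upgrades this to two-sided annihilation, and an induction
  on \<open>n\<close> then shows that \<open>g\<close> annihilates \<open>X\<^sup>n\<close> iff every coefficient of \<open>g\<close> annihilates
  \<open>C\<^sup>n\<close>, where \<open>C\<close> is the set of coefficients of the elements of \<open>X\<close>. So if
  \<open>r\<^sub>R(C\<^sup>n) = eR\<close>, then \<open>r\<^sub>A(X\<^sup>n) = EA\<close> for the constant series \<open>E = e\<close>.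
  For a right ideal \<open>I\<close> of \<open>A\<close> one uses instead the right ideal of \<open>R\<close> generated by \<open>C\<close>,
  which has the same power annihilators: \<open>f \<cdot> r\<close> has coefficients \<open>f(u) \<omega>\<^sub>u(r)\<close>, and
  compatibility removes the twist \<open>\<omega>\<^sub>u\<close>. Ramsey's theorem provides the finiteness
  behind the multiplication of \<open>A\<close>: in an artinian narrow set every sequence has
  \<open>i < j\<close> with \<open>x\<^sub>i \<le> x\<^sub>j\<close>.\<close>

lemma strictly_ordered_monoidD:
  fixes u v t :: "'b::{monoid_mult,order}"
  assumes "strictly_ordered_monoid_wrt ((\<le>) :: 'b \<Rightarrow> 'b \<Rightarrow> bool)"
  shows "u \<le> v \<Longrightarrow> u * t \<le> v * t" and "u \<le> v \<Longrightarrow> t * u \<le> t * v"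
    and "u < v \<Longrightarrow> u * t < v * t" and "u < v \<Longrightarrow> t * u < t * v"
  using assms unfolding strictly_ordered_monoid_wrt_def less_le by blast+

text \<open>Ramsey's theorem for the colouring of pairs \<open>i < j\<close> by whether \<open>x i \<le> x j\<close>,
  \<open>x j < x i\<close> or neither: an infinite set of the second colour would give an infinite
  descending chain and one of the third colour an infinite antichain.\<close>
lemma artinian_narrow_monotone_subseq:
  fixes x :: "nat \<Rightarrow> 'b::order"
  assumes art: "artinian_set X" and nar: "narrow_set X" and x: "\<forall>i. x i \<in> X"
  shows "\<exists>H. infinite H \<and> (\<forall>i\<in>H. \<forall>j\<in>H. i < j \<longrightarrow> x i \<le> x j)"
proof -
  define c :: "nat set \<Rightarrow> nat" where
    "c P = (if x (Min P) \<le> x (Max P) then 0 else if x (Max P) < x (Min P) then 1 else 2)" for P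
  have "\<forall>i\<in>UNIV. \<forall>j\<in>UNIV. i \<noteq> j \<longrightarrow> c {i, j} < 3" by (simp add: c_def)
  from Ramsey2[OF infinite_UNIV_nat this] obtain Y t
    where Y: "infinite Y" "t < 3" and ct: "\<forall>i\<in>Y. \<forall>j\<in>Y. i \<noteq> j \<longrightarrow> c {i, j} = t"
    by blast
  have colour: "t = (if x i \<le> x j then 0 else if x j < x i then 1 else 2)"
    if "i \<in> Y" "j \<in> Y" "i < j" for i j
  proof -
    have "Min {i, j} = i" "Max {i, j} = j" using that(3) by auto
    moreover have "c {i, j} = t" using ct that by simp
    ultimately show ?thesis by (simp only: c_def)
  qed
  consider "t = 0" | "t = 1" | "t = 2" using Y(2) by linarith
  then show ?thesis
  proof cases
    case 1
    then have "x i \<le> x j" if "i \<in> Y" "j \<in> Y" "i < j" for i j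
      using colour[OF that] by (simp split: if_splits)
    with Y(1) show ?thesis by blast
  next
    case 2
    then have descending: "x j < x i" if "i \<in> Y" "j \<in> Y" "i < j" for i j
      using colour[OF that] by (cases "x i \<le> x j"; cases "x j < x i") simp_all
    have "enumerate Y n \<in> Y" "enumerate Y n < enumerate Y (Suc n)" for n
      using Y(1) by (simp_all add: enumerate_in_set enumerate_step)
    then have "\<exists>g. \<forall>n. g n \<in> X \<and> g (Suc n) < g n"
      using x descending by (intro exI[of _ "\<lambda>n. x (enumerate Y n)"]) simp
    with art show ?thesis by (simp add: artinian_set_def)
  next
    case 3
    then have incomparable_less: "\<not> x i \<le> x j \<and> \<not> x j \<le> x i"
      if "i \<in> Y" "j \<in> Y" "i < j" for i j
      using colour[OF that] by (cases "x i \<le> x j"; cases "x j < x i"; simp add: less_le; metis)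
    have incomparable: "\<not> x i \<le> x j" if "i \<in> Y" "j \<in> Y" "i \<noteq> j" for i j
      using incomparable_less that by (cases "i < j") (simp_all add: not_less_iff_gr_or_eq)
    then have "inj_on x Y" by (intro inj_onI) (metis order_refl)
    moreover have "finite (x ` Y)"
    proof -
      have "\<forall>a\<in>x ` Y. \<forall>b\<in>x ` Y. a \<noteq> b \<longrightarrow> \<not> a \<le> b \<and> \<not> b \<le> a"
        using incomparable by blast
      moreover have "x ` Y \<subseteq> X" using x by blast
      ultimately show ?thesis using nar unfolding narrow_set_def by blast
    qed
    ultimately show ?thesis using Y(1) finite_image_iff by blast
  qed
qed

lemma artinian_narrow_good_pair:
  fixes a b :: "nat \<Rightarrow> 'b::order"
  assumes "artinian_set A" "narrow_set A" "\<forall>i. a i \<in> A"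
    and "artinian_set B" "narrow_set B" "\<forall>i. b i \<in> B"
  shows "\<exists>i j. i < j \<and> a i \<le> a j \<and> b i \<le> b j"
proof -
  obtain H where H: "infinite H" "\<forall>i\<in>H. \<forall>j\<in>H. i < j \<longrightarrow> a i \<le> a j"
    using artinian_narrow_monotone_subseq[OF assms(1-3)] by blast
  define e where "e = enumerate H"
  have e: "e n \<in> H" "i < j \<Longrightarrow> e i < e j" for n i j
    using H(1) by (simp_all add: e_def enumerate_in_set enumerate_mono)
  obtain H' where H': "infinite H'" "\<forall>i\<in>H'. \<forall>j\<in>H'. i < j \<longrightarrow> b (e i) \<le> b (e j)"
    using artinian_narrow_monotone_subseq[OF assms(4,5), of "b \<circ> e"] assms(6) by auto
  obtain i where i: "i \<in> H'" using H'(1) infinite_imp_nonempty by blast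
  obtain j where j: "j \<in> H'" "i < j" using H'(1) unfolding infinite_nat_iff_unbounded by blast
  show ?thesis
    using H(2) e H'(2) i j by (intro exI[of _ "e i"] exI[of _ "e j"]) auto
qed

lemma good_pairs_imp_artinian_narrow:
  fixes P :: "'b::order set"
  assumes good: "\<forall>y :: nat \<Rightarrow> 'b. (\<forall>i. y i \<in> P) \<longrightarrow> (\<exists>i j. i < j \<and> y i \<le> y j)"
  shows "artinian_set P" and "narrow_set P"
proof -
  show "artinian_set P"
    unfolding artinian_set_def
  proof
    assume "\<exists>y::nat \<Rightarrow> 'b. \<forall>n. y n \<in> P \<and> y (Suc n) < y n"
    then obtain y :: "nat \<Rightarrow> 'b" where y: "\<forall>n. y n \<in> P" "\<And>n. y (Suc n) < y n" by blast
    have descending: "y j < y i" if "i < j" for i j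
      using that by (induct i j rule: less_Suc_induct) (auto intro: y(2) order.strict_trans)
    obtain i j where "i < j" "y i \<le> y j" using good y(1) by blast
    moreover have "y j < y i" using descending calculation(1) .
    ultimately show False by (simp add: less_le_not_le)
  qed
  show "narrow_set P"
    unfolding narrow_set_def
  proof (intro allI impI, rule ccontr)
    fix Y assume Y: "Y \<subseteq> P" "\<forall>x\<in>Y. \<forall>y\<in>Y. x \<noteq> y \<longrightarrow> \<not> x \<le> y \<and> \<not> y \<le> x" "infinite Y"
    obtain y :: "nat \<Rightarrow> 'b" where y: "inj y" "range y \<subseteq> Y"
      using infinite_countable_subset[OF Y(3)] by blast
    then have "\<forall>i. y i \<in> P" using Y(1) by blast
    then obtain i j where ij: "i < j" "y i \<le> y j" using good by blast
    have "y i \<noteq> y j" using ij(1) y(1) by (simp add: inj_eq)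
    moreover have "y i \<in> Y" "y j \<in> Y" using y(2) by auto
    ultimately show False using Y(2) ij(2) by blast
  qed
qed

lemma sgps_if_supp_subset:
  assumes "supp f \<subseteq> P" "artinian_set P" "narrow_set P"
  shows "f \<in> sgps"
proof -
  have "artinian_set (supp f)" using assms(1,2) unfolding artinian_set_def by blast
  moreover have "narrow_set (supp f)" using assms(1,3) unfolding narrow_set_def by (meson subset_trans)
  ultimately show ?thesis by (simp add: sgps_def)
qed

lemma sgps_if_supp_subset_supp:
  "g \<in> sgps \<Longrightarrow> supp f \<subseteq> supp g \<Longrightarrow> f \<in> sgps"
  by (rule sgps_if_supp_subset) (auto simp: sgps_def)

text \<open>Without this, the sum defining \<open>sgps_mult\<close> would be the junk value \<open>0\<close>.\<close>
lemma finite_factorisations: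
  fixes f g :: "'b::{monoid_mult,order} \<Rightarrow> 'a::zero"
  assumes so: "strictly_ordered_monoid_wrt ((\<le>) :: 'b \<Rightarrow> 'b \<Rightarrow> bool)"
    and f: "f \<in> sgps" and g: "g \<in> sgps"
  shows "finite {(u, v). u * v = s \<and> f u \<noteq> 0 \<and> g v \<noteq> 0}"
proof (rule ccontr)
  assume "infinite {(u, v). u * v = s \<and> f u \<noteq> 0 \<and> g v \<noteq> 0}"
  then obtain p :: "nat \<Rightarrow> 'b \<times> 'b"
    where p: "inj p" "range p \<subseteq> {(u, v). u * v = s \<and> f u \<noteq> 0 \<and> g v \<noteq> 0}"
    using infinite_countable_subset by blast
  define a b where "a = fst \<circ> p" and "b = snd \<circ> p"
  have ab: "a i * b i = s" "a i \<in> supp f" "b i \<in> supp g" for i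
    using subsetD[OF p(2) rangeI[of p i]] by (auto simp: a_def b_def supp_def split: prod.splits)
  obtain i j where ij: "i < j" "a i \<le> a j" "b i \<le> b j"
    using artinian_narrow_good_pair[of "supp f" a "supp g" b] f g ab by (auto simp: sgps_def)
  have "p i \<noteq> p j" using ij(1) p(1) by (simp add: inj_eq)
  then consider "a i < a j" | "a i = a j" "b i < b j"
    using ij(2,3) by (cases "a i = a j") (auto simp: a_def b_def prod_eq_iff less_le)
  then have "a i * b i < a j * b j"
  proof cases
    case 1
    then have "a i * b i < a j * b i" by (rule strictly_ordered_monoidD(3)[OF so])
    also have "\<dots> \<le> a j * b j" using ij(3) by (rule strictly_ordered_monoidD(2)[OF so])
    finally show ?thesis .
  next
    case 2
    then show ?thesis using strictly_ordered_monoidD(4)[OF so] by simp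
  qed
  then show False using ab by simp
qed

lemma artinian_narrow_set_products:
  fixes A B :: "'b::{monoid_mult,order} set"
  assumes so: "strictly_ordered_monoid_wrt ((\<le>) :: 'b \<Rightarrow> 'b \<Rightarrow> bool)"
    and A: "artinian_set A" "narrow_set A" and B: "artinian_set B" "narrow_set B"
  shows "artinian_set {u * v | u v. u \<in> A \<and> v \<in> B}" and "narrow_set {u * v | u v. u \<in> A \<and> v \<in> B}"
proof -
  have good: "\<forall>y :: nat \<Rightarrow> 'b. (\<forall>i. y i \<in> {u * v | u v. u \<in> A \<and> v \<in> B}) \<longrightarrow> (\<exists>i j. i < j \<and> y i \<le> y j)"
  proof (intro allI impI)
    fix y :: "nat \<Rightarrow> 'b" assume y: "\<forall>i. y i \<in> {u * v | u v. u \<in> A \<and> v \<in> B}"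
    then have "\<forall>i. \<exists>p. y i = fst p * snd p \<and> fst p \<in> A \<and> snd p \<in> B" by auto
    from choice[OF this] obtain p
      where p: "\<forall>i. y i = fst (p i) * snd (p i) \<and> fst (p i) \<in> A \<and> snd (p i) \<in> B" by blast
    define a b where "a = fst \<circ> p" and "b = snd \<circ> p"
    have ab: "y i = a i * b i" "a i \<in> A" "b i \<in> B" for i using p by (simp_all add: a_def b_def)
    obtain i j where ij: "i < j" "a i \<le> a j" "b i \<le> b j"
      using artinian_narrow_good_pair[of A a B b] A B ab(2,3) by blast
    have "a i * b i \<le> a j * b i" using ij(2) by (rule strictly_ordered_monoidD(1)[OF so])
    also have "\<dots> \<le> a j * b j" using ij(3) by (rule strictly_ordered_monoidD(2)[OF so])
    finally show "\<exists>i j. i < j \<and> y i \<le> y j" using ij(1) ab(1) by (intro exI[of _ i] exI[of _ j]) simp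
  qed
  show "artinian_set {u * v | u v. u \<in> A \<and> v \<in> B}" "narrow_set {u * v | u v. u \<in> A \<and> v \<in> B}"
    using good_pairs_imp_artinian_narrow[OF good] by blast+
qed

lemma sgps_mult_in_sgps:
  fixes f g :: "'b::{monoid_mult,order} \<Rightarrow> 'a::ring_1"
  assumes so: "strictly_ordered_monoid_wrt ((\<le>) :: 'b \<Rightarrow> 'b \<Rightarrow> bool)"
    and f: "f \<in> sgps" and g: "g \<in> sgps"
  shows "sgps_mult \<omega> f g \<in> sgps"
proof (rule sgps_if_supp_subset)
  show "supp (sgps_mult \<omega> f g) \<subseteq> {u * v | u v. u \<in> supp f \<and> v \<in> supp g}"
  proof
    fix s assume "s \<in> supp (sgps_mult \<omega> f g)"
    have "{(u, v). u * v = s \<and> f u \<noteq> 0 \<and> g v \<noteq> 0} \<noteq> {}"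
    proof
      assume "{(u, v). u * v = s \<and> f u \<noteq> 0 \<and> g v \<noteq> 0} = {}"
      then have "sgps_mult \<omega> f g s = 0" by (simp only: sgps_mult_def sum.empty)
      with \<open>s \<in> supp (sgps_mult \<omega> f g)\<close> show False by (simp add: supp_def)
    qed
    then show "s \<in> {u * v | u v. u \<in> supp f \<and> v \<in> supp g}" by (auto simp: supp_def)
  qed
  show "artinian_set {u * v | u v. u \<in> supp f \<and> v \<in> supp g}"
    "narrow_set {u * v | u v. u \<in> supp f \<and> v \<in> supp g}"
    using artinian_narrow_set_products[OF so] f g by (simp_all add: sgps_def)
qed

lemma monoid_hom_to_EndD:
  fixes \<omega> :: "'b::monoid_mult \<Rightarrow> 'a::ring_1 \<Rightarrow> 'a"
  assumes "monoid_hom_to_End \<omega>"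
  shows "\<omega> s (a * b) = \<omega> s a * \<omega> s b" and "\<omega> s (a + b) = \<omega> s a + \<omega> s b" and "\<omega> s 0 = 0"
    and "\<omega> 1 a = a" and "\<omega> (s * t) a = \<omega> s (\<omega> t a)"
proof -
  have endo: "ring_endo (\<omega> s)" using assms by (simp add: monoid_hom_to_End_def)
  then show "\<omega> s (a * b) = \<omega> s a * \<omega> s b" "\<omega> s (a + b) = \<omega> s a + \<omega> s b"
    by (simp_all add: ring_endo_def)
  have "\<omega> s (0 + 0) = \<omega> s 0 + \<omega> s 0" using endo unfolding ring_endo_def by blast
  then show "\<omega> s 0 = 0" by simp
  show "\<omega> 1 a = a" "\<omega> (s * t) a = \<omega> s (\<omega> t a)"
    using assms by (simp_all add: monoid_hom_to_End_def)
qed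

lemma S_compatible_iff:
  fixes \<omega> :: "'b \<Rightarrow> 'a::ring_1 \<Rightarrow> 'a"
  assumes "S_compatible \<omega>"
  shows "a * \<omega> s b = 0 \<longleftrightarrow> a * b = 0"
  using assms by (simp add: S_compatible_def compatible_endo_def)

lemma S_compatible_sandwich_iff:
  fixes \<omega> :: "'b::monoid_mult \<Rightarrow> 'a::ring_1 \<Rightarrow> 'a"
  assumes h: "monoid_hom_to_End \<omega>" and c: "S_compatible \<omega>"
  shows "a * \<omega> s x * b = 0 \<longleftrightarrow> a * x * b = 0"
proof -
  have "a * \<omega> s x * b = 0 \<longleftrightarrow> (a * \<omega> s x) * \<omega> s b = 0"
    by (rule S_compatible_iff[OF c, symmetric])
  also have "\<dots> \<longleftrightarrow> a * \<omega> s (x * b) = 0"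
    by (simp add: monoid_hom_to_EndD(1)[OF h] mult.assoc)
  also have "\<dots> \<longleftrightarrow> a * x * b = 0"
    by (simp add: S_compatible_iff[OF c] mult.assoc)
  finally show ?thesis .
qed

lemma sgps_mult_eq_0_iff:
  fixes \<omega> :: "'b::{monoid_mult,order} \<Rightarrow> 'a::ring_1 \<Rightarrow> 'a"
  assumes c: "S_compatible \<omega>" and arm: "S_omega_Armendariz \<omega>"
    and f: "f \<in> sgps" and g: "g \<in> sgps"
  shows "sgps_mult \<omega> f g = (\<lambda>_. 0) \<longleftrightarrow> (\<forall>s t. f s * g t = 0)"
proof
  assume "sgps_mult \<omega> f g = (\<lambda>_. 0)"
  then have "\<forall>s t. f s * \<omega> s (g t) = 0" using arm f g by (simp add: S_omega_Armendariz_def)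
  then show "\<forall>s t. f s * g t = 0" by (simp add: S_compatible_iff[OF c])
next
  assume "\<forall>s t. f s * g t = 0"
  then have "f u * \<omega> u (g v) = 0" for u v by (simp add: S_compatible_iff[OF c])
  then show "sgps_mult \<omega> f g = (\<lambda>_. 0)"
    unfolding sgps_mult_def by (intro ext sum.neutral) auto
qed

definition const_series :: "'a::zero \<Rightarrow> 'b::one \<Rightarrow> 'a" where
  "const_series r = (\<lambda>s. if s = 1 then r else 0)"

lemma const_series_in_sgps: "(const_series r :: 'b::{monoid_mult,order} \<Rightarrow> 'a::zero) \<in> sgps"
proof (rule sgps_if_supp_subset)
  show "supp (const_series r :: 'b \<Rightarrow> 'a) \<subseteq> {1}" by (auto simp: supp_def const_series_def)
  have "\<forall>y :: nat \<Rightarrow> 'b. (\<forall>i. y i \<in> {1}) \<longrightarrow> (\<exists>i j. i < j \<and> y i \<le> y j)"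
    by (intro allI impI exI[of _ 0] exI[of _ 1]) simp
  then show "artinian_set {1::'b}" "narrow_set {1::'b}"
    by (rule good_pairs_imp_artinian_narrow)+
qed

lemma sgps_mult_const_series_left:
  fixes \<omega> :: "'b::monoid_mult \<Rightarrow> 'a::ring_1 \<Rightarrow> 'a"
  assumes h: "monoid_hom_to_End \<omega>"
  shows "sgps_mult \<omega> (const_series e) g = (\<lambda>s. e * g s)"
proof
  fix s
  have "{(u, v). u * v = s \<and> const_series e u \<noteq> 0 \<and> g v \<noteq> 0} =
      (if e \<noteq> 0 \<and> g s \<noteq> 0 then {(1, s)} else {})"
    by (auto simp: const_series_def split: if_splits)
  then show "sgps_mult \<omega> (const_series e) g s = e * g s"
    by (simp add: sgps_mult_def const_series_def monoid_hom_to_EndD[OF h])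
qed

lemma sgps_mult_const_series_right:
  fixes \<omega> :: "'b::monoid_mult \<Rightarrow> 'a::ring_1 \<Rightarrow> 'a"
  assumes h: "monoid_hom_to_End \<omega>"
  shows "sgps_mult \<omega> f (const_series r) s = f s * \<omega> s r"
proof -
  have "{(u, v). u * v = s \<and> f u \<noteq> 0 \<and> const_series r v \<noteq> 0} =
      (if f s \<noteq> 0 \<and> r \<noteq> 0 then {(s, 1)} else {})"
    by (auto simp: const_series_def split: if_splits)
  then show ?thesis
    by (simp add: sgps_mult_def const_series_def monoid_hom_to_EndD[OF h])
qed

lemma sgps_mult_sandwich:
  fixes \<omega> :: "'b::{monoid_mult,order} \<Rightarrow> 'a::ring_1 \<Rightarrow> 'a"
  assumes so: "strictly_ordered_monoid_wrt ((\<le>) :: 'b \<Rightarrow> 'b \<Rightarrow> bool)"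
    and h: "monoid_hom_to_End \<omega>" and f: "f \<in> sgps" and k: "k \<in> sgps"
  shows "sgps_mult \<omega> (\<lambda>u. a * f u) (\<lambda>v. k v * \<omega> v b) s = a * sgps_mult \<omega> f k s * \<omega> s b"
proof -
  let ?A = "{(u, v). u * v = s \<and> a * f u \<noteq> 0 \<and> k v * \<omega> v b \<noteq> 0}"
  let ?B = "{(u, v). u * v = s \<and> f u \<noteq> 0 \<and> k v \<noteq> 0}"
  let ?T = "\<lambda>(u, v). a * f u * \<omega> u (k v * \<omega> v b)"
  have "?A \<subseteq> ?B" by auto
  moreover have "\<forall>x\<in>?B - ?A. ?T x = 0"
  proof
    fix x assume "x \<in> ?B - ?A"
    then obtain u v where "x = (u, v)" and "a * f u = 0 \<or> k v * \<omega> v b = 0" by auto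
    then show "?T x = 0" using monoid_hom_to_EndD(3)[OF h, of u] by auto
  qed
  ultimately have "sum ?T ?A = sum ?T ?B"
    by (intro sum.mono_neutral_left finite_factorisations[OF so f k])
  also have "\<dots> = (\<Sum>(u, v)\<in>?B. a * (f u * \<omega> u (k v)) * \<omega> s b)"
    by (intro sum.cong) (auto simp: monoid_hom_to_EndD[OF h] mult.assoc)
  finally show ?thesis
    by (simp add: sgps_mult_def sum_distrib_left sum_distrib_right case_prod_unfold)
qed

text \<open>The Armendariz condition, applied to \<open>a f\<close> and \<open>k \<omega>(b)\<close>, lets a two-sided annihilation
  of the coefficients of \<open>f k\<close> pass to products of coefficients of \<open>f\<close> and \<open>k\<close>.\<close>
lemma sgps_mult_sandwich_eq_0_iff:
  fixes \<omega> :: "'b::{monoid_mult,order} \<Rightarrow> 'a::ring_1 \<Rightarrow> 'a"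
  assumes so: "strictly_ordered_monoid_wrt ((\<le>) :: 'b \<Rightarrow> 'b \<Rightarrow> bool)"
    and h: "monoid_hom_to_End \<omega>" and c: "S_compatible \<omega>" and arm: "S_omega_Armendariz \<omega>"
    and f: "f \<in> sgps" and k: "k \<in> sgps"
  shows "(\<forall>s. a * sgps_mult \<omega> f k s * b = 0) \<longleftrightarrow> (\<forall>u v. a * f u * k v * b = 0)"
proof
  assume zero: "\<forall>s. a * sgps_mult \<omega> f k s * b = 0"
  define p q where "p = (\<lambda>u. a * f u)" and "q = (\<lambda>v. k v * \<omega> v b)"
  have p: "p \<in> sgps" by (rule sgps_if_supp_subset_supp[OF f]) (auto simp: supp_def p_def)
  have q: "q \<in> sgps" by (rule sgps_if_supp_subset_supp[OF k]) (auto simp: supp_def q_def)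
  have "sgps_mult \<omega> p q = (\<lambda>_. 0)"
  proof
    fix s
    have "sgps_mult \<omega> p q s = a * sgps_mult \<omega> f k s * \<omega> s b"
      unfolding p_def q_def by (rule sgps_mult_sandwich[OF so h f k])
    then show "sgps_mult \<omega> p q s = 0"
      using zero S_compatible_iff[OF c, of "a * sgps_mult \<omega> f k s" s b] by simp
  qed
  then have "\<forall>u v. p u * q v = 0" using sgps_mult_eq_0_iff[OF c arm p q] by blast
  then have "(a * f u * k v) * \<omega> v b = 0" for u v by (simp add: p_def q_def mult.assoc)
  then show "\<forall>u v. a * f u * k v * b = 0" using S_compatible_iff[OF c] by blast
next
  assume zero: "\<forall>u v. a * f u * k v * b = 0"
  show "\<forall>s. a * sgps_mult \<omega> f k s * b = 0"
  proof
    fix s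
    have "a * f u * \<omega> u (k v) * b = 0" for u v
      using zero S_compatible_sandwich_iff[OF h c, of "a * f u" u "k v" b] by (simp add: mult.assoc)
    then show "a * sgps_mult \<omega> f k s * b = 0"
      unfolding sgps_mult_def sum_distrib_left sum_distrib_right
      by (intro sum.neutral) (auto simp: mult.assoc)
  qed
qed

lemma mem_setpow_Suc_Suc:
  "x \<in> setpow m X (Suc (Suc n)) \<longleftrightarrow> (\<exists>y z. x = m y z \<and> y \<in> X \<and> z \<in> setpow m X (Suc n))"
  by auto

lemma setpow_subset:
  assumes "X \<subseteq> C" and "\<And>x y. x \<in> C \<Longrightarrow> y \<in> C \<Longrightarrow> m x y \<in> C"
  shows "setpow m X (Suc n) \<subseteq> C"
  by (induction n) (use assms in auto)

lemma setpow_mono: "X \<subseteq> Y \<Longrightarrow> setpow m X n \<subseteq> setpow m Y n"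
  by (induction m X n rule: setpow.induct) auto

lemma setpow_Suc_Suc_sandwich_eq_0_iff:
  fixes X :: "'a::{semigroup_mult,zero} set"
  shows "(\<forall>y\<in>setpow (*) X (Suc (Suc m)). a * y * b = 0) \<longleftrightarrow>
    (\<forall>x\<in>X. \<forall>y\<in>setpow (*) X (Suc m). (a * x) * y * b = 0)"
proof
  assume zero: "\<forall>y\<in>setpow (*) X (Suc (Suc m)). a * y * b = 0"
  show "\<forall>x\<in>X. \<forall>y\<in>setpow (*) X (Suc m). (a * x) * y * b = 0"
  proof (intro ballI)
    fix x y assume "x \<in> X" "y \<in> setpow (*) X (Suc m)"
    then have "x * y \<in> setpow (*) X (Suc (Suc m))" by auto
    with zero have "a * (x * y) * b = 0" by blast
    then show "a * x * y * b = 0" by (simp add: mult.assoc)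
  qed
next
  assume zero: "\<forall>x\<in>X. \<forall>y\<in>setpow (*) X (Suc m). (a * x) * y * b = 0"
  show "\<forall>y\<in>setpow (*) X (Suc (Suc m)). a * y * b = 0"
  proof
    fix y assume "y \<in> setpow (*) X (Suc (Suc m))"
    then obtain x z where "y = x * z" "x \<in> X" "z \<in> setpow (*) X (Suc m)"
      unfolding mem_setpow_Suc_Suc by blast
    with zero show "a * y * b = 0" by (simp add: mult.assoc)
  qed
qed

definition coeff_set :: "('b \<Rightarrow> 'a) set \<Rightarrow> 'a set" where
  "coeff_set Z = {f s | f s. f \<in> Z}"

lemma setpow_sandwich_eq_0_iff:
  fixes \<omega> :: "'b::{monoid_mult,order} \<Rightarrow> 'a::ring_1 \<Rightarrow> 'a"
  assumes so: "strictly_ordered_monoid_wrt ((\<le>) :: 'b \<Rightarrow> 'b \<Rightarrow> bool)"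
    and h: "monoid_hom_to_End \<omega>" and c: "S_compatible \<omega>" and arm: "S_omega_Armendariz \<omega>"
    and Z: "Z \<subseteq> sgps"
  shows "(\<forall>g\<in>setpow (sgps_mult \<omega>) Z (Suc m). \<forall>s. a * g s * b = 0) \<longleftrightarrow>
    (\<forall>y\<in>setpow (*) (coeff_set Z) (Suc m). a * y * b = 0)"
proof (induction m arbitrary: a)
  case 0
  then show ?case by (auto simp: coeff_set_def)
next
  case (Suc m)
  have Zm: "setpow (sgps_mult \<omega>) Z (Suc m) \<subseteq> sgps"
    using Z sgps_mult_in_sgps[OF so] by (rule setpow_subset)
  have "(\<forall>g\<in>setpow (sgps_mult \<omega>) Z (Suc (Suc m)). \<forall>s. a * g s * b = 0) \<longleftrightarrow>
      (\<forall>f\<in>Z. \<forall>k\<in>setpow (sgps_mult \<omega>) Z (Suc m). \<forall>s. a * sgps_mult \<omega> f k s * b = 0)"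
    by (simp only: Ball_def mem_setpow_Suc_Suc) blast
  also have "\<dots> \<longleftrightarrow> (\<forall>f\<in>Z. \<forall>u. \<forall>k\<in>setpow (sgps_mult \<omega>) Z (Suc m). \<forall>v. (a * f u) * k v * b = 0)"
    using sgps_mult_sandwich_eq_0_iff[OF so h c arm] Z Zm by blast
  also have "\<dots> \<longleftrightarrow> (\<forall>f\<in>Z. \<forall>u. \<forall>y\<in>setpow (*) (coeff_set Z) (Suc m). (a * f u) * y * b = 0)"
    by (simp only: Suc.IH)
  also have "\<dots> \<longleftrightarrow> (\<forall>x\<in>coeff_set Z. \<forall>y\<in>setpow (*) (coeff_set Z) (Suc m). (a * x) * y * b = 0)"
    by (auto simp: coeff_set_def)
  also have "\<dots> \<longleftrightarrow> (\<forall>y\<in>setpow (*) (coeff_set Z) (Suc (Suc m)). a * y * b = 0)"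
    by (rule setpow_Suc_Suc_sandwich_eq_0_iff[symmetric])
  finally show ?case .
qed

lemma rann_sgps_setpow:
  fixes \<omega> :: "'b::{monoid_mult,order} \<Rightarrow> 'a::ring_1 \<Rightarrow> 'a"
  assumes so: "strictly_ordered_monoid_wrt ((\<le>) :: 'b \<Rightarrow> 'b \<Rightarrow> bool)"
    and h: "monoid_hom_to_End \<omega>" and c: "S_compatible \<omega>" and arm: "S_omega_Armendariz \<omega>"
    and Z: "Z \<subseteq> sgps"
  shows "rann sgps (sgps_mult \<omega>) (\<lambda>_. 0) (setpow (sgps_mult \<omega>) Z (Suc m)) =
    {g \<in> sgps. \<forall>t. g t \<in> rann UNIV (*) 0 (setpow (*) (coeff_set Z) (Suc m))}"
proof -
  have Zm: "setpow (sgps_mult \<omega>) Z (Suc m) \<subseteq> sgps"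
    using Z sgps_mult_in_sgps[OF so] by (rule setpow_subset)
  have "(\<forall>f\<in>setpow (sgps_mult \<omega>) Z (Suc m). sgps_mult \<omega> f g = (\<lambda>_. 0)) \<longleftrightarrow>
      (\<forall>t. \<forall>y\<in>setpow (*) (coeff_set Z) (Suc m). y * g t = 0)" if g: "g \<in> sgps" for g
  proof -
    have "(\<forall>f\<in>setpow (sgps_mult \<omega>) Z (Suc m). sgps_mult \<omega> f g = (\<lambda>_. 0)) \<longleftrightarrow>
        (\<forall>t. \<forall>f\<in>setpow (sgps_mult \<omega>) Z (Suc m). \<forall>s. 1 * f s * g t = 0)"
      using sgps_mult_eq_0_iff[OF c arm _ g] Zm by auto
    also have "\<dots> \<longleftrightarrow> (\<forall>t. \<forall>y\<in>setpow (*) (coeff_set Z) (Suc m). 1 * y * g t = 0)"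
      by (simp only: setpow_sandwich_eq_0_iff[OF so h c arm Z])
    finally show ?thesis by simp
  qed
  then show ?thesis by (auto simp: rann_def)
qed

lemma rann_sgps_setpow_eq_principal:
  fixes \<omega> :: "'b::{monoid_mult,order} \<Rightarrow> 'a::ring_1 \<Rightarrow> 'a"
  assumes so: "strictly_ordered_monoid_wrt ((\<le>) :: 'b \<Rightarrow> 'b \<Rightarrow> bool)"
    and h: "monoid_hom_to_End \<omega>" and c: "S_compatible \<omega>" and arm: "S_omega_Armendariz \<omega>"
    and Z: "Z \<subseteq> sgps" and idem: "e * e = e"
    and rann_e: "rann UNIV (*) 0 (setpow (*) (coeff_set Z) (Suc m)) = {e * a | a. a \<in> UNIV}"
  shows "rann sgps (sgps_mult \<omega>) (\<lambda>_. 0) (setpow (sgps_mult \<omega>) Z (Suc m)) =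
    {sgps_mult \<omega> (const_series e) g | g. g \<in> sgps}"
proof -
  let ?E = "sgps_mult \<omega> (const_series e)"
  have fixed_iff: "(\<forall>t. g t \<in> {e * a | a. a \<in> UNIV}) \<longleftrightarrow> ?E g = g" for g :: "'b \<Rightarrow> 'a"
  proof
    assume range: "\<forall>t. g t \<in> {e * a | a. a \<in> UNIV}"
    have "e * g t = g t" for t
    proof -
      obtain a where "g t = e * a" using range by blast
      then show ?thesis using idem by (simp add: mult.assoc[symmetric])
    qed
    then show "?E g = g" by (simp add: sgps_mult_const_series_left[OF h])
  next
    assume "?E g = g"
    then have "g t = e * g t" for t by (simp add: sgps_mult_const_series_left[OF h] fun_eq_iff)
    then show "\<forall>t. g t \<in> {e * a | a. a \<in> UNIV}" by blast
  qed
  have E_closed: "?E g \<in> sgps" if "g \<in> sgps" for g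
    by (rule sgps_if_supp_subset_supp[OF that]) (auto simp: supp_def sgps_mult_const_series_left[OF h])
  have E_idem: "?E (?E g) = ?E g" for g :: "'b \<Rightarrow> 'a"
    by (simp add: sgps_mult_const_series_left[OF h] idem mult.assoc[symmetric])
  show ?thesis
    unfolding rann_sgps_setpow[OF so h c arm Z] rann_e
  proof (intro set_eqI iffI)
    fix g :: "'b \<Rightarrow> 'a" assume "g \<in> {g \<in> sgps. \<forall>t. g t \<in> {e * a | a. a \<in> UNIV}}"
    then have "g \<in> sgps" "?E g = g" using fixed_iff by auto
    then show "g \<in> {?E g | g. g \<in> sgps}" by force
  next
    fix g :: "'b \<Rightarrow> 'a" assume "g \<in> {?E g | g. g \<in> sgps}"
    then obtain g' where "g' \<in> sgps" "g = ?E g'" by blast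
    then show "g \<in> {g \<in> sgps. \<forall>t. g t \<in> {e * a | a. a \<in> UNIV}}"
      using E_closed E_idem fixed_iff by simp
  qed
qed

definition right_ideal_hull :: "'a::ring_1 set \<Rightarrow> 'a set" where
  "right_ideal_hull C = \<Inter>{K. right_ideal_in UNIV (+) uminus (*) 0 K \<and> C \<subseteq> K}"

lemma right_ideal_hull: "right_ideal_in UNIV (+) uminus (*) 0 (right_ideal_hull C)"
  unfolding right_ideal_hull_def right_ideal_in_def by auto

lemma right_ideal_hull_subset: "C \<subseteq> right_ideal_hull C"
  unfolding right_ideal_hull_def by blast

lemma right_ideal_hull_least:
  "right_ideal_in UNIV (+) uminus (*) 0 K \<Longrightarrow> C \<subseteq> K \<Longrightarrow> right_ideal_hull C \<subseteq> K"
  unfolding right_ideal_hull_def by blast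

text \<open>The \<open>y\<close> with \<open>a y r b = 0\<close> for all \<open>r\<close> form a right ideal. It contains each
  coefficient \<open>f u\<close> of \<open>I\<close>, since \<open>f \<cdot> r \<in> I\<close> has \<open>u\<close>-coefficient \<open>f u \<omega>\<^sub>u(r)\<close> and
  compatibility removes the twist \<open>\<omega>\<^sub>u\<close>.\<close>
lemma right_ideal_hull_coeff_set_sandwich:
  fixes \<omega> :: "'b::monoid_mult \<Rightarrow> 'a::ring_1 \<Rightarrow> 'a"
  assumes h: "monoid_hom_to_End \<omega>" and c: "S_compatible \<omega>"
    and I: "\<forall>f\<in>I. \<forall>r. sgps_mult \<omega> f (const_series r) \<in> I"
    and zero: "\<forall>y\<in>coeff_set I. a * y * b = 0"
    and w: "w \<in> right_ideal_hull (coeff_set I)"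
  shows "a * w * b = 0"
proof -
  define K where "K = {y. \<forall>r. a * y * r * b = 0}"
  have "right_ideal_in UNIV (+) uminus (*) 0 K"
    unfolding right_ideal_in_def
  proof (intro conjI ballI)
    show "K \<subseteq> UNIV" "0 \<in> K" by (simp_all add: K_def)
    fix x assume x: "x \<in> K"
    then show "- x \<in> K" by (simp add: K_def)
    show "x + y \<in> K" if "y \<in> K" for y
      using x that by (simp add: K_def distrib_left distrib_right)
    fix r' :: 'a
    have "a * x * (r' * r) * b = 0" for r using x by (simp add: K_def)
    then show "x * r' \<in> K" by (simp add: K_def mult.assoc)
  qed
  moreover have "coeff_set I \<subseteq> K"
  proof
    fix y assume "y \<in> coeff_set I"
    then obtain f u where f: "f \<in> I" and y: "y = f u" by (auto simp: coeff_set_def)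
    have "a * (f u * \<omega> u r) * b = 0" for r
    proof -
      have "sgps_mult \<omega> f (const_series r) u \<in> coeff_set I"
        using I f unfolding coeff_set_def by blast
      then show ?thesis using zero by (simp add: sgps_mult_const_series_right[OF h])
    qed
    then have "a * f u * r * b = 0" for r
      using S_compatible_sandwich_iff[OF h c, of "a * f u" u r b] by (simp add: mult.assoc)
    then show "y \<in> K" by (simp add: K_def y)
  qed
  ultimately have "w \<in> K" using right_ideal_hull_least w by blast
  then have "a * w * 1 * b = 0" unfolding K_def by blast
  then show ?thesis by simp
qed

lemma setpow_right_ideal_hull_coeff_set_sandwich:
  fixes \<omega> :: "'b::monoid_mult \<Rightarrow> 'a::ring_1 \<Rightarrow> 'a"
  assumes h: "monoid_hom_to_End \<omega>" and c: "S_compatible \<omega>"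
    and I: "\<forall>f\<in>I. \<forall>r. sgps_mult \<omega> f (const_series r) \<in> I"
    and zero: "\<forall>y\<in>setpow (*) (coeff_set I) (Suc m). a * y * b = 0"
  shows "\<forall>y\<in>setpow (*) (right_ideal_hull (coeff_set I)) (Suc m). a * y * b = 0"
  using zero
proof (induction m arbitrary: a b)
  case 0
  then show ?case using right_ideal_hull_coeff_set_sandwich[OF h c I] by simp
next
  case (Suc m)
  have "a * w * z * b = 0"
    if "w \<in> right_ideal_hull (coeff_set I)" "z \<in> setpow (*) (right_ideal_hull (coeff_set I)) (Suc m)"
    for w z
  proof -
    have "\<forall>x\<in>coeff_set I. a * x * (z * b) = 0"
    proof
      fix x assume "x \<in> coeff_set I"
      then have "\<forall>y\<in>setpow (*) (coeff_set I) (Suc m). (a * x) * y * b = 0"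
        using Suc.prems setpow_Suc_Suc_sandwich_eq_0_iff by blast
      then have "\<forall>y\<in>setpow (*) (right_ideal_hull (coeff_set I)) (Suc m). (a * x) * y * b = 0"
        by (rule Suc.IH)
      then show "a * x * (z * b) = 0" using that(2) by (simp add: mult.assoc)
    qed
    then have "a * w * (z * b) = 0" by (rule right_ideal_hull_coeff_set_sandwich[OF h c I _ that(1)])
    then show ?thesis by (simp add: mult.assoc)
  qed
  then show ?case using setpow_Suc_Suc_sandwich_eq_0_iff by blast
qed

lemma rann_setpow_right_ideal_hull_coeff_set:
  fixes \<omega> :: "'b::monoid_mult \<Rightarrow> 'a::ring_1 \<Rightarrow> 'a"
  assumes h: "monoid_hom_to_End \<omega>" and c: "S_compatible \<omega>"
    and I: "\<forall>f\<in>I. \<forall>r. sgps_mult \<omega> f (const_series r) \<in> I"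
  shows "rann UNIV (*) 0 (setpow (*) (right_ideal_hull (coeff_set I)) (Suc m)) =
    rann UNIV (*) 0 (setpow (*) (coeff_set I) (Suc m))"
proof (intro set_eqI iffI)
  fix b assume "b \<in> rann UNIV (*) 0 (setpow (*) (right_ideal_hull (coeff_set I)) (Suc m))"
  then show "b \<in> rann UNIV (*) 0 (setpow (*) (coeff_set I) (Suc m))"
    using setpow_mono[OF right_ideal_hull_subset] unfolding rann_def by blast
next
  fix b assume "b \<in> rann UNIV (*) 0 (setpow (*) (coeff_set I) (Suc m))"
  then have "\<forall>y\<in>setpow (*) (coeff_set I) (Suc m). 1 * y * b = 0" by (simp add: rann_def)
  then have "\<forall>y\<in>setpow (*) (right_ideal_hull (coeff_set I)) (Suc m). 1 * y * b = 0"
    by (rule setpow_right_ideal_hull_coeff_set_sandwich[OF h c I])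
  then show "b \<in> rann UNIV (*) 0 (setpow (*) (right_ideal_hull (coeff_set I)) (Suc m))"
    by (simp add: rann_def)
qed

lemma rann_sgps_setpow_principal_idempotent:
  fixes \<omega> :: "'b::{monoid_mult,order} \<Rightarrow> 'a::ring_1 \<Rightarrow> 'a"
  assumes so: "strictly_ordered_monoid_wrt ((\<le>) :: 'b \<Rightarrow> 'b \<Rightarrow> bool)"
    and h: "monoid_hom_to_End \<omega>" and c: "S_compatible \<omega>" and arm: "S_omega_Armendariz \<omega>"
    and Z: "Z \<subseteq> sgps" and n: "n > 0" and idem: "e * e = e"
    and rann_e: "rann UNIV (*) 0 (setpow (*) (coeff_set Z) n) = {e * a | a. a \<in> UNIV}"
  shows "\<exists>n>0. \<exists>E\<in>sgps. sgps_mult \<omega> E E = E \<and>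
    rann sgps (sgps_mult \<omega>) (\<lambda>_. 0) (setpow (sgps_mult \<omega>) Z n) = {sgps_mult \<omega> E g | g. g \<in> sgps}"
proof (intro exI conjI bexI)
  obtain m where m: "n = Suc m" using n gr0_conv_Suc by blast
  show "rann sgps (sgps_mult \<omega>) (\<lambda>_. 0) (setpow (sgps_mult \<omega>) Z n) =
      {sgps_mult \<omega> (const_series e) g | g. g \<in> sgps}"
    using rann_e unfolding m by (rule rann_sgps_setpow_eq_principal[OF so h c arm Z idem])
  show "sgps_mult \<omega> (const_series e) (const_series e) = const_series e"
    unfolding sgps_mult_const_series_left[OF h] using idem by (simp add: const_series_def fun_eq_iff)
qed (use n const_series_in_sgps in auto)

theorem proposition3p6:
  fixes \<omega> :: "'b::{monoid_mult,order} \<Rightarrow> 'a::ring_1 \<Rightarrow> 'a"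
  assumes "strictly_ordered_monoid_wrt ((\<le>) :: 'b \<Rightarrow> 'b \<Rightarrow> bool)"
    and "quasitotally_ordered ((\<le>) :: 'b \<Rightarrow> 'b \<Rightarrow> bool)"
    and "monoid_hom_to_End \<omega>"
    and "S_compatible \<omega>"
    and "S_omega_Armendariz \<omega>"
  shows "(gen_right_Baer TYPE('a) \<longrightarrow> gen_right_Baer_in sgps (sgps_mult \<omega>) (\<lambda>_. 0))
       \<and> (gen_right_quasi_Baer TYPE('a) \<longrightarrow>
            gen_right_quasi_Baer_in sgps (\<lambda>f g s. f s + g s) (\<lambda>f s. - f s) (sgps_mult \<omega>) (\<lambda>_. 0))"
proof -
  note principal = rann_sgps_setpow_principal_idempotent[OF assms(1,3-5)]
  show ?thesis
  proof (intro conjI impI)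
    assume Baer: "gen_right_Baer TYPE('a)"
    show "gen_right_Baer_in sgps (sgps_mult \<omega>) (\<lambda>_. 0)"
      unfolding gen_right_Baer_in_def
    proof (intro allI impI)
      fix X :: "('b \<Rightarrow> 'a) set" assume X: "X \<subseteq> sgps \<and> X \<noteq> {}"
      then have "coeff_set X \<subseteq> UNIV \<and> coeff_set X \<noteq> {}" by (auto simp: coeff_set_def)
      from Baer[unfolded gen_right_Baer_in_def, rule_format, OF this] obtain n e where "n > 0" "e * e = e"
        "rann UNIV (*) 0 (setpow (*) (coeff_set X) n) = {e * a | a. a \<in> UNIV}"
        by blast
      with X show "\<exists>n>0. \<exists>E\<in>sgps. sgps_mult \<omega> E E = E \<and>
          rann sgps (sgps_mult \<omega>) (\<lambda>_. 0) (setpow (sgps_mult \<omega>) X n) = {sgps_mult \<omega> E a | a. a \<in> sgps}"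
        by (intro principal) simp_all
    qed
  next
    assume quasi_Baer: "gen_right_quasi_Baer TYPE('a)"
    show "gen_right_quasi_Baer_in sgps (\<lambda>f g s. f s + g s) (\<lambda>f s. - f s) (sgps_mult \<omega>) (\<lambda>_. 0)"
      unfolding gen_right_quasi_Baer_in_def
    proof (intro allI impI)
      fix I :: "('b \<Rightarrow> 'a) set"
      assume "right_ideal_in sgps (\<lambda>f g s. f s + g s) (\<lambda>f s. - f s) (sgps_mult \<omega>) (\<lambda>_. 0) I"
      then have I: "I \<subseteq> sgps" "\<forall>f\<in>I. \<forall>r. sgps_mult \<omega> f (const_series r) \<in> I"
        using const_series_in_sgps unfolding right_ideal_in_def by blast+
      from quasi_Baer[unfolded gen_right_quasi_Baer_in_def, rule_format, OF right_ideal_hull]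
      obtain n e where "n > 0" "e * e = e"
        and "rann UNIV (*) 0 (setpow (*) (right_ideal_hull (coeff_set I)) n) = {e * a | a. a \<in> UNIV}"
        by blast
      moreover obtain m where "n = Suc m" using \<open>n > 0\<close> gr0_conv_Suc by blast
      ultimately show "\<exists>n>0. \<exists>E\<in>sgps. sgps_mult \<omega> E E = E \<and>
          rann sgps (sgps_mult \<omega>) (\<lambda>_. 0) (setpow (sgps_mult \<omega>) I n) = {sgps_mult \<omega> E a | a. a \<in> sgps}"
        using rann_setpow_right_ideal_hull_coeff_set[OF assms(3,4) I(2)] by (intro principal[OF I(1)]) simp_all
    qed
  qed
qed

end
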